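(* For a polynomial $p(x,y)=\sum_{i,j\ge0}a_{i,j}x^iy^j$ and an integer $n\ge0$ define $I_n(p)=\sum_{i=0}^{n}\sum_{j=0}^{n-i}(-1)^j\binom{n-i}{j}a_{i,j}$. Then for all integers $n,k\ge 0$, $$I_n\big(((x-1)(y-1))^k\big)=1.$$ *)

theory Defs
  imports "HOL-Computational_Algebra.Polynomial"
begin

text \<open>Bivariate integer polynomials p(x,y) are represented as int poly poly:
  polynomials in y whose coefficients are polynomials in x.
  Thus a_{i,j} (coefficient of x^i y^j) is coeff (coeff p j) i.\<close>

definition bx :: "int poly poly" where
  "bx = [: [:0, 1:] :]"

definition bY :: "int poly poly" where
  "bY = [: 0, 1 :]"

definition acoef :: "int poly poly \<Rightarrow> nat \<Rightarrow> nat \<Rightarrow> int" where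
  "acoef p i j = coeff (coeff p j) i"

definition In :: "nat \<Rightarrow> int poly poly \<Rightarrow> int" where
  "In n p = (\<Sum>i = 0..n. \<Sum>j = 0..n - i. (-1) ^ j * int ((n - i) choose j) * acoef p i j)"

end

theory Submission
  imports Defs "HOL-Computational_Algebra.Formal_Power_Series"
begin

text \<open>Since \<open>((x - 1)(y - 1))^k = (x - 1)^k (y - 1)^k\<close>, the coefficients factor as
  \<open>a\<^sub>i\<^sub>j = c\<^sub>i c\<^sub>j\<close> with \<open>c\<^sub>i = (-1)^(k-i) binom(k, i)\<close>. For fixed \<open>i\<close>, the sum over \<open>j\<close> is then
  a Vandermonde convolution with alternating signs and equals \<open>(-1)^k binom(k + n - i, n - i)\<close>.
  What remains, \<open>\<Sum>\<^sub>i (-1)^i binom(k, i) binom(k + n - i, n - i)\<close>, is the coefficient of \<open>x^n\<close> in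
  \<open>(1 - x)^k (1 - x)^(-k-1) = (1 - x)^(-1)\<close>, i.e. \<open>1\<close>; in the proof this is the generalized
  Vandermonde identity for the upper indices \<open>k\<close> and \<open>-k-1\<close>.\<close>

lemma coeff_linear_poly_power_eq:
  fixes a b :: "'a :: comm_semiring_1"
  shows "coeff ([:a, b:] ^ n) i = of_nat (n choose i) * b ^ i * a ^ (n - i)"
proof (cases "i \<le> n")
  case True
  then show ?thesis by (rule coeff_linear_poly_power)
next
  case False
  have "degree ([:a, b:] ^ n) \<le> n"
    by (rule order.trans[OF degree_power_le]) (simp add: degree_pCons_le)
  with False show ?thesis by (simp add: coeff_eq_0 binomial_eq_0)
qed

lemma minus_one_power_diff_mult_choose:
  "(-1::int) ^ (k - j) * int (k choose j) = (-1) ^ k * (-1) ^ j * int (k choose j)"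
proof (cases "j \<le> k")
  case True
  then have "(-1::int) ^ k = (-1) ^ (k - j) * (-1) ^ j"
    by (simp flip: power_add)
  moreover have "(-1::int) ^ j * (-1) ^ j = 1"
    by (simp flip: power_add)
  ultimately show ?thesis
    by (metis mult.assoc mult_1_right)
qed simp

lemma power_bx_minus_one_bY_minus_one:
  "((bx - 1) * (bY - 1)) ^ k = smult ([:-1, 1:] ^ k) ([:-1, 1:] ^ k)"
proof -
  have "(bx - 1) * (bY - 1) = smult [:-1, 1:] [:-1, 1:]"
    unfolding bx_def bY_def by (simp add: one_pCons)
  then show ?thesis by (simp only: smult_power)
qed

lemma acoef_power_bx_minus_one_bY_minus_one:
  "acoef (((bx - 1) * (bY - 1)) ^ k) i j =
     ((-1) ^ (k - i) * int (k choose i)) * ((-1) ^ (k - j) * int (k choose j))"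
proof -
  have "(-1 :: int poly) ^ m = [:(-1) ^ m:]" for m
    by (induct m) simp_all
  then have "coeff ([:-1, 1:] ^ k :: int poly poly) j = [:(-1) ^ (k - j) * int (k choose j):]"
    by (simp add: coeff_linear_poly_power_eq of_nat_poly mult.commute)
  then show ?thesis
    unfolding acoef_def power_bx_minus_one_bY_minus_one
    by (simp add: coeff_linear_poly_power_eq mult_ac)
qed

lemma alternating_convolution_signed_choose:
  "(\<Sum>j = 0..m. (-1) ^ j * int (m choose j) * ((-1) ^ (k - j) * int (k choose j)))
     = (-1) ^ k * int ((k + m) choose m)"
proof -
  have "(\<Sum>j = 0..m. (-1) ^ j * int (m choose j) * ((-1) ^ (k - j) * int (k choose j)))
      = (-1) ^ k * int (\<Sum>j = 0..m. (k choose j) * (m choose (m - j)))"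
    by (auto simp: minus_one_power_diff_mult_choose sum_distrib_left binomial_symmetric[symmetric]
        intro!: sum.cong)
  then show ?thesis by (simp add: binomial_Vandermonde)
qed

lemma alternating_sum_choose_mult_choose_add_field:
  "(\<Sum>i = 0..n. (-1) ^ i * of_nat (k choose i) * of_nat ((k + (n - i)) choose (n - i)))
     = (1 :: 'a :: field_char_0)"
proof -
  have "(\<Sum>i = 0..n. (-1) ^ i * of_nat (k choose i) * of_nat ((k + (n - i)) choose (n - i)))
      = (\<Sum>i = 0..n. (-1) ^ n * ((of_nat k gchoose i) * ((- of_nat k - 1) gchoose (n - i)) :: 'a))"
  proof (rule sum.cong[OF refl])
    fix i assume "i \<in> {0..n}"
    then have sign: "(-1::'a) ^ i * (-1) ^ (n - i) = (-1) ^ n"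
      by (simp flip: power_add)
    have "(of_nat ((k + (n - i)) choose (n - i)) :: 'a)
        = (-1) ^ (n - i) * ((- of_nat k - 1) gchoose (n - i))"
      by (subst binomial_gbinomial, subst gbinomial_negated_upper) (simp add: algebra_simps)
    then show "(-1) ^ i * of_nat (k choose i) * of_nat ((k + (n - i)) choose (n - i))
        = (-1) ^ n * ((of_nat k gchoose i) * ((- of_nat k - 1) gchoose (n - i)) :: 'a)"
      by (simp only: binomial_gbinomial sign[symmetric] mult_ac)
  qed
  also have "\<dots> = (-1) ^ n * ((-1) gchoose n)"
    by (simp add: gbinomial_Vandermonde flip: sum_distrib_left)
  also have "\<dots> = 1"
    using gbinomial_minus[of "1::'a" n] binomial_gbinomial[of n n, where 'a='a]
    by (simp flip: power_add)
  finally show ?thesis .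
qed

lemma alternating_sum_choose_mult_choose_add:
  "(\<Sum>i = 0..n. (-1) ^ i * int (k choose i) * int ((k + (n - i)) choose (n - i))) = 1"
proof -
  have "of_int (\<Sum>i = 0..n. (-1) ^ i * int (k choose i) * int ((k + (n - i)) choose (n - i)))
      = (1 :: rat)"
    unfolding of_int_sum of_int_mult of_int_power of_int_of_nat_eq of_int_minus of_int_1
    by (rule alternating_sum_choose_mult_choose_add_field)
  then show ?thesis
    by (simp only: of_int_eq_1_iff)
qed

theorem lemma3p3:
  fixes n k :: nat
  shows "In n (((bx - 1) * (bY - 1)) ^ k) = 1"
proof -
  have "In n (((bx - 1) * (bY - 1)) ^ k)
      = (\<Sum>i = 0..n. ((-1) ^ (k - i) * int (k choose i)) *
          (\<Sum>j = 0..n - i. (-1) ^ j * int ((n - i) choose j) * ((-1) ^ (k - j) * int (k choose j))))"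
    unfolding In_def acoef_power_bx_minus_one_bY_minus_one by (simp add: sum_distrib_left mult_ac)
  also have "\<dots> = (\<Sum>i = 0..n. ((-1) ^ (k - i) * int (k choose i)) *
          ((-1) ^ k * int ((k + (n - i)) choose (n - i))))"
    by (simp only: alternating_convolution_signed_choose)
  also have "\<dots> = (\<Sum>i = 0..n. (-1) ^ i * int (k choose i) * int ((k + (n - i)) choose (n - i)))"
  proof (rule sum.cong[OF refl])
    fix i
    have "((-1) ^ (k - i) * int (k choose i)) * ((-1) ^ k * int ((k + (n - i)) choose (n - i)))
        = ((-1) ^ k * (-1) ^ k) * ((-1) ^ i * int (k choose i) * int ((k + (n - i)) choose (n - i)))"
      by (simp only: minus_one_power_diff_mult_choose) (simp only: mult_ac)
    also have "\<dots> = (-1) ^ i * int (k choose i) * int ((k + (n - i)) choose (n - i))"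
      by (simp flip: power_add)
    finally show "((-1) ^ (k - i) * int (k choose i)) * ((-1) ^ k * int ((k + (n - i)) choose (n - i)))
        = (-1) ^ i * int (k choose i) * int ((k + (n - i)) choose (n - i))" .
  qed
  also have "\<dots> = 1"
    by (rule alternating_sum_choose_mult_choose_add)
  finally show ?thesis .
qed

end
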